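(* Let $k\ge 3$ be odd and let $G$ be the $k$-uniform sunflower, with Laplacian tensor $\mathcal L$. Then $\lambda(\mathcal L)=2$.
   Context: A $k$-uniform hypergraph $G=(V,E)$ has vertex set $V=[n]$ and a nonempty set $E$ of $k$-element subsets of $V$; $d_i$ is the number of edges containing $i$. The $k$-uniform sunflower has vertex set $\{i_{j,s}: j\in[k-1], s\in[k]\}\cup\{i_k\}$ (all distinct) and edges $\{i_{j,1},\ldots,i_{j,k}\}$ for $j\in[k-1]$ together with $\{i_{1,1},\ldots,i_{k-1,1},i_k\}$. The Laplacian tensor $\mathcal L$ of $G$ acts by $(\mathcal L\mathbf x^{k-1})_i=d_ix_i^{k-1}-\sum_{e\in E,\,i\in e}\prod_{s\in e\setminus\{i\}}x_s$ (it is $\mathcal D-\mathcal A$ with $\mathcal D$ the diagonal degree tensor and $\mathcal A$ the adjacency tensor with entries $\frac1{(k-1)!}$ on edges). A real $\lambda$ is an H-eigenvalue of $\mathcal L$ if some nonzero $\mathbf x\in\mathbb R^n$ satisfies $(\mathcal L\mathbf x^{k-1})_i=\lambda x_i^{k-1}$ for all $i$; $\lambda(\mathcal L)$ is the largest H-eigenvalue. *)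

theory Defs
  imports Complex_Main
begin

definition degree :: "nat set set \<Rightarrow> nat \<Rightarrow> nat" where
  "degree E i = card {e \<in> E. i \<in> e}"

text \<open>(L x^(k-1))_i for the Laplacian tensor L = D - A of a k-uniform hypergraph.\<close>
definition lap_apply :: "nat \<Rightarrow> nat set set \<Rightarrow> (nat \<Rightarrow> real) \<Rightarrow> nat \<Rightarrow> real" where
  "lap_apply k E x i =
     real (degree E i) * x i ^ (k - 1) - (\<Sum>e\<in>{e \<in> E. i \<in> e}. \<Prod>s\<in>e - {i}. x s)"

definition is_H_eigenvalue :: "nat \<Rightarrow> nat \<Rightarrow> nat set set \<Rightarrow> real \<Rightarrow> bool" where
  "is_H_eigenvalue n k E lam \<longleftrightarrow>
     (\<exists>x :: nat \<Rightarrow> real. (\<exists>i\<in>{1..n}. x i \<noteq> 0) \<and>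
        (\<forall>i\<in>{1..n}. lap_apply k E x i = lam * x i ^ (k - 1)))"

definition is_largest_H_eigenvalue :: "nat \<Rightarrow> nat \<Rightarrow> nat set set \<Rightarrow> real \<Rightarrow> bool" where
  "is_largest_H_eigenvalue n k E lam \<longleftrightarrow>
     is_H_eigenvalue n k E lam \<and> (\<forall>mu. is_H_eigenvalue n k E mu \<longrightarrow> mu \<le> lam)"

definition sunflower_edges :: "nat \<Rightarrow> (nat \<Rightarrow> nat \<Rightarrow> nat) \<Rightarrow> nat \<Rightarrow> nat set set" where
  "sunflower_edges k idx c =
     {idx j ` {1..k} | j. j \<in> {1..k-1}} \<union> {insert c ((\<lambda>j. idx j 1) ` {1..k-1})}"

end

theory Submission
  imports Defs
begin

text \<open>The indicator vector of a root (a vertex of degree 2 lying in its petal and in the core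
  edge) is an H-eigenvector for 2. Conversely let \<open>x\<close> be an H-eigenvector for \<open>\<mu> > 2\<close>.
  The leaf equations of a petal force all leaves to have the same \<open>k\<close>-th power, so for odd \<open>k\<close>
  the product \<open>P\<close> of the \<open>k - 1\<close> leaves is nonnegative. Combining the root equation with the
  center equation gives \<open>(\<mu> - 1) a d^k = P a^2 + (\<mu> - 2) a^(k+1) \<ge> 0\<close> for every root
  value \<open>a\<close> and the center value \<open>d\<close>, so all roots have the sign of \<open>d\<close>; their product
  is then nonnegative, whereas the center equation makes it \<open>(1 - \<mu>) d^(k-1)\<close>, which is
  negative unless \<open>d = 0\<close>. Hence \<open>d = 0\<close>, and then all roots and all leaves vanish.\<close>

lemma prod_nonneg_if_odd_powers_equal:
  fixes y :: "'a \<Rightarrow> real"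
  assumes "odd m" and "even (card A)" and "\<forall>t\<in>A. y t ^ m = b"
  shows "0 \<le> prod y A"
proof -
  have "prod y A ^ m = (\<Prod>t\<in>A. y t ^ m)" by (rule prod_power_distrib)
  also have "\<dots> = b ^ card A" using assms(3) by simp
  finally have "0 \<le> prod y A ^ m" using assms(2) by (simp add: zero_le_even_power)
  then show ?thesis using assms(1) by (simp add: zero_le_odd_power)
qed

lemma odd_power_mult_nonneg_iff:
  fixes a d :: real
  assumes "odd k"
  shows "0 \<le> a * d ^ k \<longleftrightarrow> 0 \<le> a * d"
  using assms by (metis power_mult_distrib zero_le_mult_iff zero_le_odd_power)

lemma leaves_product_nonneg:
  fixes y :: "nat \<Rightarrow> real" and L :: real
  assumes "odd k" and "L \<noteq> 1"
    and leaf: "\<forall>s\<in>{2..k}. (1 - L) * y s ^ (k - 1) = (\<Prod>t\<in>{1..k} - {s}. y t)"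
  shows "0 \<le> (\<Prod>t\<in>{2..k}. y t)"
proof (rule prod_nonneg_if_odd_powers_equal)
  show "\<forall>s\<in>{2..k}. y s ^ k = y 1 * (\<Prod>t\<in>{2..k}. y t) / (1 - L)"
  proof
    fix s assume s: "s \<in> {2..k}"
    have "(1 - L) * y s ^ k = (1 - L) * y s ^ (k - 1) * y s"
      using \<open>odd k\<close> by (cases k) (simp_all add: power_Suc2)
    also have "\<dots> = y 1 * (\<Prod>t\<in>{2..k} - {s}. y t) * y s"
    proof -
      have "{1..k} - {s} = insert 1 ({2..k} - {s})" using s by auto
      then show ?thesis using leaf s by simp
    qed
    also have "\<dots> = y 1 * (\<Prod>t\<in>{2..k}. y t)"
      using s by (simp add: prod.remove mult.commute mult.left_commute)
    finally show "y s ^ k = y 1 * (\<Prod>t\<in>{2..k}. y t) / (1 - L)"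
      using \<open>L \<noteq> 1\<close> by (simp add: field_simps)
  qed
qed (use \<open>odd k\<close> in auto)

lemma root_times_center_nonneg:
  fixes a d P Q L :: real
  assumes "odd k" and "L > 2" and "0 \<le> P"
    and root: "(2 - L) * a ^ (k - 1) = P + d * Q"
    and center: "(1 - L) * d ^ (k - 1) = a * Q"
  shows "0 \<le> a * d"
proof -
  have pow: "x ^ (k - 1) * x = x ^ k" for x :: real
    using \<open>odd k\<close> by (cases k) (simp_all add: power_Suc2)
  have "(2 - L) * a ^ (k + 1) = (2 - L) * a ^ (k - 1) * a * a"
    by (simp flip: pow)
  also have "\<dots> = (P + d * Q) * a * a" by (simp only: root)
  also have "\<dots> = P * a\<^sup>2 + (a * Q) * d * a"
    by (simp add: algebra_simps power2_eq_square)
  also have "\<dots> = P * a\<^sup>2 + (1 - L) * d ^ (k - 1) * d * a"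
    by (simp only: center)
  also have "\<dots> = P * a\<^sup>2 + (1 - L) * (a * d ^ k)"
    by (simp flip: pow add: algebra_simps)
  finally have "(L - 1) * (a * d ^ k) = P * a\<^sup>2 + (L - 2) * a ^ (k + 1)"
    by (simp add: algebra_simps)
  moreover have "0 \<le> P * a\<^sup>2 + (L - 2) * a ^ (k + 1)"
  proof -
    have "0 \<le> a ^ (k + 1)" using \<open>odd k\<close> by (intro zero_le_even_power) simp
    then show ?thesis using \<open>L > 2\<close> \<open>0 \<le> P\<close> by simp
  qed
  ultimately have "0 \<le> a * d ^ k"
    using \<open>L > 2\<close> zero_le_mult_iff[of "L - 1" "a * d ^ k"] by linarith
  then show ?thesis using odd_power_mult_nonneg_iff[OF \<open>odd k\<close>] by blast
qed

lemma center_vanishes: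
  fixes a :: "'a \<Rightarrow> real" and d L :: real
  assumes "even (card J)" and "L > 1"
    and roots: "\<forall>j\<in>J. 0 \<le> a j * d"
    and center: "(1 - L) * d ^ card J = prod a J"
  shows "d = 0"
proof (rule ccontr)
  assume "d \<noteq> 0"
  then have pos: "0 < d ^ card J" using \<open>even (card J)\<close> by (simp add: zero_less_power_eq)
  have "0 \<le> (\<Prod>j\<in>J. a j * d)" using roots by (simp add: prod_nonneg)
  also have "\<dots> = prod a J * d ^ card J" by (simp add: prod.distrib)
  finally have "0 \<le> prod a J" using pos by (simp add: zero_le_mult_iff)
  moreover have "prod a J < 0" using center pos \<open>L > 1\<close> by (simp flip: center add: mult_neg_pos)
  ultimately show False by simp
qed

locale sunflower =
  fixes k c :: nat and idx :: "nat \<Rightarrow> nat \<Rightarrow> nat"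
  assumes three_le_k: "k \<ge> 3"
    and inj_idx: "inj_on (\<lambda>(j, s). idx j s) ({1..k-1} \<times> {1..k})"
    and center_fresh: "c \<notin> (\<lambda>(j, s). idx j s) ` ({1..k-1} \<times> {1..k})"
begin

abbreviation edges :: "nat set set" where
  "edges \<equiv> sunflower_edges k idx c"

definition petal :: "nat \<Rightarrow> nat set" where
  "petal j = idx j ` {1..k}"

definition core :: "nat set" where
  "core = insert c ((\<lambda>j. idx j 1) ` {1..k-1})"

definition vertices :: "nat set" where
  "vertices = insert c ((\<lambda>(j, s). idx j s) ` ({1..k-1} \<times> {1..k}))"

lemma idx_eq_iff:
  assumes "j \<in> {1..k-1}" "s \<in> {1..k}" "j' \<in> {1..k-1}" "s' \<in> {1..k}"
  shows "idx j s = idx j' s' \<longleftrightarrow> j = j' \<and> s = s'"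
  using inj_onD[OF inj_idx, of "(j, s)" "(j', s')"] assms by auto

lemma idx_neq_center: "j \<in> {1..k-1} \<Longrightarrow> s \<in> {1..k} \<Longrightarrow> idx j s \<noteq> c"
  using center_fresh by force

lemma inj_on_petal: "j \<in> {1..k-1} \<Longrightarrow> inj_on (idx j) {1..k}"
  by (auto simp: inj_on_def idx_eq_iff)

lemma inj_on_roots: "inj_on (\<lambda>j. idx j 1) {1..k-1}"
  using three_le_k by (auto simp: inj_on_def idx_eq_iff)

lemma edges_eq: "edges = petal ` {1..k-1} \<union> {core}"
  unfolding sunflower_edges_def petal_def core_def by auto

lemma edges_containing:
  "{e \<in> edges. v \<in> e} = petal ` {j \<in> {1..k-1}. v \<in> petal j} \<union> {e \<in> {core}. v \<in> e}"
  unfolding edges_eq by auto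

lemma edges_at_leaf:
  assumes "j \<in> {1..k-1}" "s \<in> {2..k}"
  shows "{e \<in> edges. idx j s \<in> e} = {petal j}"
proof -
  have "{j' \<in> {1..k-1}. idx j s \<in> petal j'} = {j}"
    using assms by (auto simp: petal_def idx_eq_iff)
  moreover have "idx j s \<notin> core"
    using assms three_le_k by (auto simp: core_def idx_eq_iff idx_neq_center)
  ultimately show ?thesis unfolding edges_containing by auto
qed

lemma edges_at_root:
  assumes "j \<in> {1..k-1}"
  shows "{e \<in> edges. idx j 1 \<in> e} = {petal j, core}"
proof -
  have "{j' \<in> {1..k-1}. idx j 1 \<in> petal j'} = {j}"
    using assms three_le_k by (auto simp: petal_def idx_eq_iff)
  moreover have "idx j 1 \<in> core"
    using assms by (simp add: core_def)
  ultimately show ?thesis unfolding edges_containing by auto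
qed

lemma edges_at_center: "{e \<in> edges. c \<in> e} = {core}"
proof -
  have "{j \<in> {1..k-1}. c \<in> petal j} = {}"
    using idx_neq_center by (fastforce simp: petal_def)
  then show ?thesis unfolding edges_containing by (auto simp: core_def)
qed

lemma prod_petal_remove:
  assumes "j \<in> {1..k-1}" "s \<in> {1..k}"
  shows "(\<Prod>v\<in>petal j - {idx j s}. x v) = (\<Prod>t\<in>{1..k} - {s}. x (idx j t))"
proof -
  have "petal j - {idx j s} = idx j ` ({1..k} - {s})"
    using inj_on_image_set_diff[OF inj_on_petal[OF assms(1)], of "{1..k}" "{s}"] assms(2)
    by (simp add: petal_def)
  moreover have "inj_on (idx j) ({1..k} - {s})"
    using inj_on_petal[OF assms(1)] by (rule inj_on_subset) auto
  ultimately show ?thesis by (simp add: prod.reindex)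
qed

lemma prod_core_remove_root:
  assumes "j \<in> {1..k-1}"
  shows "(\<Prod>v\<in>core - {idx j 1}. x v) = x c * (\<Prod>i\<in>{1..k-1} - {j}. x (idx i 1))"
proof -
  have "core - {idx j 1} = insert c ((\<lambda>i. idx i 1) ` ({1..k-1} - {j}))"
    using inj_on_image_set_diff[OF inj_on_roots, of "{1..k-1}" "{j}"] assms three_le_k
      idx_neq_center[of j 1]
    by (auto simp: core_def)
  moreover have "c \<notin> (\<lambda>i. idx i 1) ` ({1..k-1} - {j})"
    using three_le_k idx_neq_center by fastforce
  moreover have "inj_on (\<lambda>i. idx i 1) ({1..k-1} - {j})"
    using inj_on_roots by (rule inj_on_subset) auto
  ultimately show ?thesis by (simp add: prod.reindex)
qed

lemma prod_core_remove_center: "(\<Prod>v\<in>core - {c}. x v) = (\<Prod>i\<in>{1..k-1}. x (idx i 1))"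
proof -
  have "core - {c} = (\<lambda>i. idx i 1) ` {1..k-1}"
    using three_le_k idx_neq_center by (fastforce simp: core_def)
  then show ?thesis using inj_on_roots by (simp add: prod.reindex)
qed

lemma lap_leaf:
  assumes "j \<in> {1..k-1}" "s \<in> {2..k}"
  shows "lap_apply k edges x (idx j s) = x (idx j s) ^ (k-1) - (\<Prod>t\<in>{1..k} - {s}. x (idx j t))"
  using prod_petal_remove[of j s x] assms
  by (simp add: lap_apply_def degree_def edges_at_leaf)

lemma lap_root:
  assumes "j \<in> {1..k-1}"
  shows "lap_apply k edges x (idx j 1) = 2 * x (idx j 1) ^ (k-1)
    - ((\<Prod>t\<in>{2..k}. x (idx j t)) + x c * (\<Prod>i\<in>{1..k-1} - {j}. x (idx i 1)))"
proof -
  have "c \<notin> petal j"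
    unfolding petal_def using idx_neq_center[OF assms] by blast
  then have "petal j \<noteq> core"
    by (auto simp: core_def)
  moreover have "{1..k} - {1} = {2..k}" by auto
  ultimately show ?thesis
    unfolding lap_apply_def degree_def edges_at_root[OF assms]
    using prod_petal_remove[of j 1 x] prod_core_remove_root[OF assms, of x] assms three_le_k
    by simp
qed

lemma lap_center: "lap_apply k edges x c = x c ^ (k-1) - (\<Prod>i\<in>{1..k-1}. x (idx i 1))"
  by (simp add: lap_apply_def degree_def edges_at_center prod_core_remove_center)

lemma vertex_cases:
  assumes "v \<in> vertices"
  obtains "v = c"
    | j where "j \<in> {1..k-1}" "v = idx j 1"
    | j s where "j \<in> {1..k-1}" "s \<in> {2..k}" "v = idx j s"
proof -
  consider "v = c" | j s where "j \<in> {1..k-1}" "s \<in> {1..k}" "v = idx j s"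
    using assms unfolding vertices_def by auto
  then show thesis
  proof cases
    case (2 j s)
    then have "s = 1 \<or> s \<in> {2..k}" by auto
    then show thesis using 2 that(2,3) by blast
  qed (use that(1) in blast)
qed


lemma root_indicator_eigenvector:
  fixes x :: "nat \<Rightarrow> real"
  defines "x \<equiv> \<lambda>v. if v = idx 1 1 then 1 else 0"
  assumes "v \<in> vertices"
  shows "lap_apply k edges x v = 2 * x v ^ (k - 1)"
proof -
  have index_ranges: "1 \<in> {1..k-1}" "2 \<in> {1..k-1}" "1 \<in> {1..k}" "2 \<in> {1..k}" "3 \<in> {1..k}"
    using three_le_k by auto
  have off_root: "x (idx j t) = 0" if "j \<in> {1..k-1}" "t \<in> {1..k}" "(j, t) \<noteq> (1, 1)" for j t
    using that index_ranges by (auto simp: x_def idx_eq_iff)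
  have "x c = 0"
    using idx_neq_center[of 1 1] index_ranges by (auto simp: x_def)
  moreover have zero_pow: "(0::real) ^ (k - 1) = 0"
    using three_le_k by simp
  ultimately show ?thesis
  proof (cases rule: vertex_cases[OF assms(2)])
    case 1
    have roots: "(\<Prod>i\<in>{1..k-1}. x (idx i 1)) = 0"
      using off_root[of 2 1] index_ranges by (intro prod_zero bexI[of _ 2]) auto
    show ?thesis unfolding 1 lap_center roots \<open>x c = 0\<close> zero_pow by simp
  next
    case (2 j)
    have leaves: "(\<Prod>t\<in>{2..k}. x (idx j t)) = 0"
      using off_root[of j 2] 2 index_ranges by (intro prod_zero bexI[of _ 2]) auto
    show ?thesis unfolding 2 lap_root[OF 2(1)] leaves \<open>x c = 0\<close> by simp
  next
    case (3 j s)
    define t where "t = (if s = 2 then 3 else 2 :: nat)"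
    have "t \<in> {1..k} - {s}" "t \<noteq> 1"
      using 3 three_le_k by (auto simp: t_def)
    then have "(\<Prod>t\<in>{1..k} - {s}. x (idx j t)) = 0"
      using off_root[of j t] 3 by (intro prod_zero bexI[of _ t]) auto
    moreover have "x (idx j s) = 0"
      using off_root[of j s] 3 by auto
    ultimately show ?thesis using 3 zero_pow by (simp add: lap_leaf del: prod_zero_iff)
  qed
qed

lemma eigenvector_vanishes:
  fixes x :: "nat \<Rightarrow> real" and mu :: real
  assumes "odd k" and "mu > 2"
    and eigen: "\<forall>v\<in>vertices. lap_apply k edges x v = mu * x v ^ (k - 1)"
    and "v \<in> vertices"
  shows "x v = 0"
proof -
  have in_vertices: "c \<in> vertices" "j \<in> {1..k-1} \<Longrightarrow> s \<in> {1..k} \<Longrightarrow> idx j s \<in> vertices" for j s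
    by (auto simp: vertices_def)
  have one_le_k: "1 \<in> {1..k}" using three_le_k by simp
  have leaf: "(1 - mu) * x (idx j s) ^ (k - 1) = (\<Prod>t\<in>{1..k} - {s}. x (idx j t))"
    if "j \<in> {1..k-1}" "s \<in> {2..k}" for j s
    using eigen in_vertices(2)[of j s] lap_leaf[of j s x] that by (auto simp: algebra_simps)
  have root: "(2 - mu) * x (idx j 1) ^ (k - 1)
      = (\<Prod>t\<in>{2..k}. x (idx j t)) + x c * (\<Prod>i\<in>{1..k-1} - {j}. x (idx i 1))"
    if "j \<in> {1..k-1}" for j
    using eigen in_vertices(2)[OF that one_le_k] lap_root[OF that, of x] by (auto simp: algebra_simps)
  have center: "(1 - mu) * x c ^ (k - 1) = (\<Prod>i\<in>{1..k-1}. x (idx i 1))"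
    using eigen in_vertices(1) lap_center[of x] by (auto simp: algebra_simps)
  have leaves_nonneg: "0 \<le> (\<Prod>t\<in>{2..k}. x (idx j t))" if "j \<in> {1..k-1}" for j
    using leaves_product_nonneg[of k mu "\<lambda>t. x (idx j t)"] leaf[OF that] assms(1,2) by simp
  have "0 \<le> x (idx j 1) * x c" if "j \<in> {1..k-1}" for j
  proof (rule root_times_center_nonneg[OF \<open>odd k\<close> \<open>mu > 2\<close> leaves_nonneg[OF that] root[OF that]])
    show "(1 - mu) * x c ^ (k - 1) = x (idx j 1) * (\<Prod>i\<in>{1..k-1} - {j}. x (idx i 1))"
      using center that by (simp add: prod.remove)
  qed
  then have center_zero: "x c = 0"
    using center_vanishes[of "{1..k-1}" mu "\<lambda>i. x (idx i 1)" "x c"] center assms(1,2) by simp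
  have root_zero: "x (idx j 1) = 0" if "j \<in> {1..k-1}" for j
  proof -
    have "0 \<le> (2 - mu) * x (idx j 1) ^ (k - 1)"
      using root[OF that] leaves_nonneg[OF that] center_zero by simp
    moreover have "(2 - mu) * x (idx j 1) ^ (k - 1) \<le> 0"
      using \<open>mu > 2\<close> \<open>odd k\<close> by (intro mult_nonpos_nonneg) (simp_all add: zero_le_even_power)
    ultimately have "(2 - mu) * x (idx j 1) ^ (k - 1) = 0" by linarith
    then show ?thesis using \<open>mu > 2\<close> three_le_k by simp
  qed
  have leaf_zero: "x (idx j s) = 0" if "j \<in> {1..k-1}" "s \<in> {2..k}" for j s
  proof -
    have "(\<Prod>t\<in>{1..k} - {s}. x (idx j t)) = 0"
      using root_zero[OF that(1)] that(2) by (intro prod_zero bexI[of _ 1]) auto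
    then have "(1 - mu) * x (idx j s) ^ (k - 1) = 0"
      by (simp only: leaf[OF that])
    then show ?thesis using \<open>mu > 2\<close> three_le_k by simp
  qed
  show ?thesis
    by (cases rule: vertex_cases[OF \<open>v \<in> vertices\<close>]) (use center_zero root_zero leaf_zero in auto)
qed

lemma two_is_H_eigenvalue: "{1..n} = vertices \<Longrightarrow> is_H_eigenvalue n k edges 2"
  unfolding is_H_eigenvalue_def
proof (intro exI conjI)
  assume "{1..n} = vertices"
  let ?x = "\<lambda>v. if v = idx 1 1 then 1 else 0 :: real"
  have "idx 1 1 \<in> vertices"
    using three_le_k by (auto simp: vertices_def)
  then show "\<exists>i\<in>{1..n}. ?x i \<noteq> 0"
    using \<open>{1..n} = vertices\<close> by auto
  show "\<forall>i\<in>{1..n}. lap_apply k edges ?x i = 2 * ?x i ^ (k - 1)"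
    using root_indicator_eigenvector \<open>{1..n} = vertices\<close> by auto
qed

lemma H_eigenvalue_le_2:
  assumes "odd k" and "{1..n} = vertices" and "is_H_eigenvalue n k edges mu"
  shows "mu \<le> 2"
proof (rule ccontr)
  assume "\<not> mu \<le> 2"
  obtain x :: "nat \<Rightarrow> real" where "\<exists>v\<in>vertices. x v \<noteq> 0"
    and "\<forall>v\<in>vertices. lap_apply k edges x v = mu * x v ^ (k - 1)"
    using assms(2,3) unfolding is_H_eigenvalue_def by auto
  with eigenvector_vanishes \<open>odd k\<close> \<open>\<not> mu \<le> 2\<close> show False by force
qed

end

theorem proposition3p5:
  fixes k n c :: nat and idx :: "nat \<Rightarrow> nat \<Rightarrow> nat"
  assumes "k \<ge> 3" and "odd k"
    and "inj_on (\<lambda>(j, s). idx j s) ({1..k-1} \<times> {1..k})"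
    and "c \<notin> (\<lambda>(j, s). idx j s) ` ({1..k-1} \<times> {1..k})"
    and "{1..n} = insert c ((\<lambda>(j, s). idx j s) ` ({1..k-1} \<times> {1..k}))"
  shows "is_largest_H_eigenvalue n k (sunflower_edges k idx c) 2"
proof -
  interpret sunflower k c idx
    using assms(1,3,4) by unfold_locales
  have "{1..n} = vertices"
    using assms(5) by (simp add: vertices_def)
  then show ?thesis
    unfolding is_largest_H_eigenvalue_def
    using two_is_H_eigenvalue H_eigenvalue_le_2 \<open>odd k\<close> by blast
qed

end
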